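(* Let $G$ be a group, $N$ a normal subgroup and $\mu\in\mathrm{Q}(N)^G$. Then $D(\mu)=\sup_{g\in G,\,x\in N}|\mu([g,x])|$.
   Context: $[g,x]=gxg^{-1}x^{-1}$. $\mathrm{Q}(N)^G$ is the space of homogeneous quasimorphisms $\mu\colon N\to\mathbb{R}$ (i.e. $D(\mu)=\sup_{x_1,x_2\in N}|\mu(x_1x_2)-\mu(x_1)-\mu(x_2)|<\infty$ and $\mu(x^n)=n\mu(x)$ for $n\in\mathbb{Z}$) satisfying $\mu(gxg^{-1})=\mu(x)$ for all $g\in G$, $x\in N$. *)

theory Defs
  imports "HOL-Algebra.Algebra"
begin

definition defect :: "('a, 'b) monoid_scheme \<Rightarrow> 'a set \<Rightarrow> ('a \<Rightarrow> real) \<Rightarrow> real" where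
  "defect G N \<mu> = (SUP p\<in>N \<times> N. \<bar>\<mu> (fst p \<otimes>\<^bsub>G\<^esub> snd p) - \<mu> (fst p) - \<mu> (snd p)\<bar>)"

definition homogeneous_quasimorphism :: "('a, 'b) monoid_scheme \<Rightarrow> 'a set \<Rightarrow> ('a \<Rightarrow> real) \<Rightarrow> bool" where
  "homogeneous_quasimorphism G N \<mu> \<longleftrightarrow>
     bdd_above ((\<lambda>p. \<bar>\<mu> (fst p \<otimes>\<^bsub>G\<^esub> snd p) - \<mu> (fst p) - \<mu> (snd p)\<bar>) ` (N \<times> N)) \<and>
     (\<forall>x\<in>N. \<forall>n::int. \<mu> (x [^]\<^bsub>G\<^esub> n) = of_int n * \<mu> x)"

definition G_invariant :: "('a, 'b) monoid_scheme \<Rightarrow> 'a set \<Rightarrow> ('a \<Rightarrow> real) \<Rightarrow> bool" where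
  "G_invariant G N \<mu> \<longleftrightarrow>
     (\<forall>g\<in>carrier G. \<forall>x\<in>N. \<mu> (g \<otimes>\<^bsub>G\<^esub> x \<otimes>\<^bsub>G\<^esub> inv\<^bsub>G\<^esub> g) = \<mu> x)"

definition commutator :: "('a, 'b) monoid_scheme \<Rightarrow> 'a \<Rightarrow> 'a \<Rightarrow> 'a" where
  "commutator G g x = g \<otimes>\<^bsub>G\<^esub> x \<otimes>\<^bsub>G\<^esub> inv\<^bsub>G\<^esub> g \<otimes>\<^bsub>G\<^esub> inv\<^bsub>G\<^esub> x"

end

theory Submission
  imports Defs
begin

text \<open>
  For \<open>g \<in> G\<close>, \<open>z \<in> N\<close> we have \<open>[g,z] = (g z g\<inverse>) z\<inverse>\<close> with \<open>\<mu>(g z g\<inverse>) = \<mu> z = -\<mu>(z\<inverse>)\<close>,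
  so every \<open>|\<mu>([g,z])|\<close> is at most \<open>D = D(\<mu>)\<close>. Conversely, let \<open>C\<close> bound all \<open>|\<mu>([g,z])|\<close>,
  fix \<open>x, y \<in> N\<close> and put \<open>Q(n) = (xy)^-n x^n y^n\<close>. Two steps of the recursion for \<open>Q\<close> cost
  only one commutator: \<open>Q(n+2)\<close> is a conjugate of a commutator times a conjugate of \<open>Q(n)\<close>,
  whence \<open>|\<mu>(Q(2m))| \<le> m (C + D)\<close>. Comparing \<open>\<mu>(x^n y^n)\<close> with \<open>\<mu>(x^n) + \<mu>(y^n)\<close> and with
  \<open>\<mu>((xy)^n) + \<mu>(Q(n))\<close>, homogeneity gives \<open>2m |\<mu>(xy) - \<mu> x - \<mu> y| \<le> 2D + m (C + D)\<close> for
  all \<open>m\<close>, so \<open>D \<le> (C + D) / 2\<close>, i.e. \<open>D \<le> C\<close>.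
\<close>

definition pow_mult_correction :: "('a, 'b) monoid_scheme \<Rightarrow> 'a \<Rightarrow> 'a \<Rightarrow> nat \<Rightarrow> 'a" where
  "pow_mult_correction G x y n = inv\<^bsub>G\<^esub> ((x \<otimes>\<^bsub>G\<^esub> y) [^]\<^bsub>G\<^esub> n) \<otimes>\<^bsub>G\<^esub> (x [^]\<^bsub>G\<^esub> n \<otimes>\<^bsub>G\<^esub> y [^]\<^bsub>G\<^esub> n)"

lemma (in group) mult_inv_cancel_left:
  "a \<in> carrier G \<Longrightarrow> z \<in> carrier G \<Longrightarrow> a \<otimes> (inv a \<otimes> z) = z"
  by (simp add: m_assoc[symmetric])

lemma (in group) inv_mult_cancel_left:
  "a \<in> carrier G \<Longrightarrow> z \<in> carrier G \<Longrightarrow> inv a \<otimes> (a \<otimes> z) = z"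
  by (simp add: m_assoc[symmetric])

text \<open>Tracking single steps instead costs one commutator per step and only gives \<open>D \<le> C + D\<close>.\<close>

lemma (in group) pow_mult_correction_Suc_Suc:
  assumes x: "x \<in> carrier G" and y: "y \<in> carrier G"
  shows "pow_mult_correction G x y (Suc (Suc n)) =
    (inv y \<otimes> commutator G (y \<otimes> inv ((x \<otimes> y) [^] Suc n)) (inv y \<otimes> (x \<otimes> y) \<otimes> inv y) \<otimes> inv (inv y))
    \<otimes> (inv (y \<otimes> y) \<otimes> pow_mult_correction G x y n \<otimes> inv (inv (y \<otimes> y)))"
proof -
  \<comment> \<open>abstracting the powers keeps \<open>simp\<close> from unfolding them during cancellation\<close>
  define a where "a = (x \<otimes> y) [^] n"
  define b where "b = x [^] n"
  define d where "d = y [^] n"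
  have [simp]: "a \<in> carrier G" "b \<in> carrier G" "d \<in> carrier G"
    using x y by (simp_all add: a_def b_def d_def)
  have xy: "x \<otimes> y \<in> carrier G" using x y by simp
  have pow_xy: "(x \<otimes> y) [^] Suc n = a \<otimes> (x \<otimes> y)"
    by (simp add: a_def)
  have pow_xy2: "(x \<otimes> y) [^] Suc (Suc n) = (x \<otimes> y) \<otimes> (a \<otimes> (x \<otimes> y))"
    by (subst nat_pow_Suc2[OF xy]) (simp only: pow_xy)
  have pow_x2: "x [^] Suc (Suc n) = x \<otimes> (x \<otimes> b)"
    unfolding b_def by (simp only: nat_pow_Suc2[OF x])
  have pow_y2: "y [^] Suc (Suc n) = d \<otimes> (y \<otimes> y)"
    using y by (simp add: d_def m_assoc)
  show ?thesis
    unfolding pow_mult_correction_def commutator_def pow_xy pow_xy2 pow_x2 pow_y2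
      a_def[symmetric] b_def[symmetric] d_def[symmetric]
    using x y by (simp add: m_assoc inv_mult_group mult_inv_cancel_left inv_mult_cancel_left)
qed

lemma le_of_nat_mult_le_linear:
  fixes a b c :: "'a::archimedean_field"
  assumes "\<And>m::nat. of_nat m * a \<le> b + of_nat m * c"
  shows "a \<le> c"
proof (rule ccontr)
  assume "\<not> a \<le> c"
  then obtain m :: nat where "b < of_nat m * (a - c)"
    using ex_less_of_nat_mult[of "a - c" b] by auto
  with assms[of m] show False
    by (simp add: algebra_simps)
qed

lemma quasimorphism_defect_le:
  assumes "homogeneous_quasimorphism G N \<mu>" and "a \<in> N" and "b \<in> N"
  shows "\<bar>\<mu> (a \<otimes>\<^bsub>G\<^esub> b) - \<mu> a - \<mu> b\<bar> \<le> defect G N \<mu>"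
proof -
  have "bdd_above ((\<lambda>p. \<bar>\<mu> (fst p \<otimes>\<^bsub>G\<^esub> snd p) - \<mu> (fst p) - \<mu> (snd p)\<bar>) ` (N \<times> N))"
    using assms(1) unfolding homogeneous_quasimorphism_def by (rule conjunct1)
  then show ?thesis
    unfolding defect_def using cSUP_upper[of "(a, b)" "N \<times> N"] assms(2,3) by fastforce
qed

context group
begin

lemma homogeneous_quasimorphism_nat_pow:
  assumes "homogeneous_quasimorphism G N \<mu>" and "z \<in> N"
  shows "\<mu> (z [^] n) = real n * \<mu> z"
  using assms unfolding homogeneous_quasimorphism_def by (metis int_pow_int of_int_of_nat_eq)

lemma homogeneous_quasimorphism_one:
  assumes "homogeneous_quasimorphism G N \<mu>" and "subgroup N G"
  shows "\<mu> \<one> = 0"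
  using homogeneous_quasimorphism_nat_pow[OF assms(1) subgroup.one_closed[OF assms(2)], of 0] by simp

lemma homogeneous_quasimorphism_inv:
  assumes "homogeneous_quasimorphism G N \<mu>" and "subgroup N G" and "z \<in> N"
  shows "\<mu> (inv z) = - \<mu> z"
proof -
  have "z [^] (-1::int) = inv z"
    using int_pow_neg[of z 1] subgroup.mem_carrier[OF assms(2,3)] by simp
  then show ?thesis
    using assms(1,3) unfolding homogeneous_quasimorphism_def by (metis mult_minus1 of_int_minus of_int_1)
qed

lemma subgroup_nat_pow_closed:
  assumes "subgroup N G" and "z \<in> N"
  shows "z [^] (n::nat) \<in> N"
  using subgroup_int_pow_closed[OF assms, of "int n"] by (simp add: int_pow_int)

lemma pow_mult_correction_closed:
  assumes "subgroup N G" and "x \<in> N" and "y \<in> N"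
  shows "pow_mult_correction G x y n \<in> N"
  unfolding pow_mult_correction_def
  using assms subgroup_nat_pow_closed[OF assms(1)] by (simp add: subgroup.m_closed subgroup.m_inv_closed)

end

locale invariant_quasimorphism = normal N G
  for N :: "'a set" and G :: "('a, 'b) monoid_scheme" (structure) +
  fixes \<mu> :: "'a \<Rightarrow> real"
  assumes homogeneous: "homogeneous_quasimorphism G N \<mu>"
    and invariant: "G_invariant G N \<mu>"
begin

lemma conj_invariant: "g \<in> carrier G \<Longrightarrow> z \<in> N \<Longrightarrow> \<mu> (g \<otimes> z \<otimes> inv g) = \<mu> z"
  using invariant unfolding G_invariant_def by blast

lemma commutator_closed: "g \<in> carrier G \<Longrightarrow> z \<in> N \<Longrightarrow> commutator G g z \<in> N"
  unfolding commutator_def by (simp add: inv_op_closed2)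

lemma abs_commutator_le_defect:
  assumes "g \<in> carrier G" and "z \<in> N"
  shows "\<bar>\<mu> (commutator G g z)\<bar> \<le> defect G N \<mu>"
proof -
  have "commutator G g z = (g \<otimes> z \<otimes> inv g) \<otimes> inv z"
    by (simp add: commutator_def)
  moreover have "\<bar>\<mu> ((g \<otimes> z \<otimes> inv g) \<otimes> inv z) - \<mu> (g \<otimes> z \<otimes> inv g) - \<mu> (inv z)\<bar> \<le> defect G N \<mu>"
    using assms by (simp add: quasimorphism_defect_le[OF homogeneous] inv_op_closed2)
  ultimately show ?thesis
    using assms conj_invariant homogeneous_quasimorphism_inv[OF homogeneous is_subgroup] by simp
qed

context
  fixes C :: real
  assumes commutator_bound: "\<And>g z. g \<in> carrier G \<Longrightarrow> z \<in> N \<Longrightarrow> \<bar>\<mu> (commutator G g z)\<bar> \<le> C"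
begin

lemma abs_pow_mult_correction_Suc_Suc_le:
  assumes x: "x \<in> N" and y: "y \<in> N"
  shows "\<bar>\<mu> (pow_mult_correction G x y (Suc (Suc n)))\<bar>
    \<le> \<bar>\<mu> (pow_mult_correction G x y n)\<bar> + C + defect G N \<mu>"
proof -
  let ?Q = "pow_mult_correction G x y"
  define c where "c = commutator G (y \<otimes> inv ((x \<otimes> y) [^] Suc n)) (inv y \<otimes> (x \<otimes> y) \<otimes> inv y)"
  have [simp]: "x \<in> carrier G" "y \<in> carrier G" "inv y \<in> carrier G" "inv (y \<otimes> y) \<in> carrier G"
    using x y by auto
  have c: "c \<in> N" "\<bar>\<mu> c\<bar> \<le> C"
    using commutator_closed commutator_bound x y unfolding c_def by simp_all
  have Q: "?Q n \<in> N"
    by (rule pow_mult_correction_closed[OF is_subgroup x y])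
  let ?c' = "inv y \<otimes> c \<otimes> inv (inv y)" and ?Q' = "inv (y \<otimes> y) \<otimes> ?Q n \<otimes> inv (inv (y \<otimes> y))"
  have decomposition: "?Q (Suc (Suc n)) = ?c' \<otimes> ?Q'"
    unfolding c_def by (rule pow_mult_correction_Suc_Suc) simp_all
  have "\<mu> ?c' = \<mu> c" "\<mu> ?Q' = \<mu> (?Q n)"
    by (rule conj_invariant; simp add: c Q)+
  then have "\<bar>\<mu> (?Q (Suc (Suc n))) - \<mu> c - \<mu> (?Q n)\<bar> = \<bar>\<mu> (?c' \<otimes> ?Q') - \<mu> ?c' - \<mu> ?Q'\<bar>"
    by (simp only: decomposition)
  also have "\<dots> \<le> defect G N \<mu>"
    by (intro quasimorphism_defect_le[OF homogeneous] inv_op_closed2) (simp_all add: c Q)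
  finally have "\<bar>\<mu> (?Q (Suc (Suc n))) - \<mu> c - \<mu> (?Q n)\<bar> \<le> defect G N \<mu>" .
  with c show ?thesis
    by linarith
qed

lemma abs_pow_mult_correction_double_le:
  assumes "x \<in> N" and "y \<in> N"
  shows "\<bar>\<mu> (pow_mult_correction G x y (2 * m))\<bar> \<le> real m * (C + defect G N \<mu>)"
proof (induction m)
  case 0
  then show ?case
    by (simp add: pow_mult_correction_def homogeneous_quasimorphism_one[OF homogeneous is_subgroup])
next
  case (Suc m)
  have "2 * Suc m = Suc (Suc (2 * m))"
    by simp
  then show ?case
    using abs_pow_mult_correction_Suc_Suc_le[OF assms, of "2 * m"] Suc.IH by (simp add: algebra_simps)
qed

lemma abs_defect_le_commutator_bound:
  assumes x: "x \<in> N" and y: "y \<in> N"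
  shows "\<bar>\<mu> (x \<otimes> y) - \<mu> x - \<mu> y\<bar> \<le> (C + defect G N \<mu>) / 2"
proof -
  let ?D = "defect G N \<mu>" and ?Q = "pow_mult_correction G x y"
  have xy: "x \<otimes> y \<in> N"
    using x y by simp
  have pow: "z [^] n \<in> N" if "z \<in> N" for z and n :: nat
    using subgroup_nat_pow_closed[OF is_subgroup that] .
  have "real m * (2 * \<bar>\<mu> (x \<otimes> y) - \<mu> x - \<mu> y\<bar>) \<le> 2 * ?D + real m * (C + ?D)" for m
  proof -
    let ?n = "2 * m"
    have split: "x [^] ?n \<otimes> y [^] ?n = (x \<otimes> y) [^] ?n \<otimes> ?Q ?n"
      using x y by (simp add: pow_mult_correction_def m_assoc[symmetric])
    have "\<mu> ((x \<otimes> y) [^] ?n) - \<mu> (x [^] ?n) - \<mu> (y [^] ?n) = real ?n * (\<mu> (x \<otimes> y) - \<mu> x - \<mu> y)"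
      using x y xy by (simp add: homogeneous_quasimorphism_nat_pow[OF homogeneous] algebra_simps)
    then have "real ?n * \<bar>\<mu> (x \<otimes> y) - \<mu> x - \<mu> y\<bar> = \<bar>\<mu> ((x \<otimes> y) [^] ?n) - \<mu> (x [^] ?n) - \<mu> (y [^] ?n)\<bar>"
      by (simp add: abs_mult)
    also have "\<dots> \<le> 2 * ?D + \<bar>\<mu> (?Q ?n)\<bar>"
      using quasimorphism_defect_le[OF homogeneous pow[OF x] pow[OF y], of ?n ?n]
        quasimorphism_defect_le[OF homogeneous pow[OF xy] pow_mult_correction_closed[OF is_subgroup x y], of ?n ?n]
      unfolding split by linarith
    also have "\<dots> \<le> 2 * ?D + real m * (C + ?D)"
      using abs_pow_mult_correction_double_le[OF x y] by simp
    finally show ?thesis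
      by simp
  qed
  then have "2 * \<bar>\<mu> (x \<otimes> y) - \<mu> x - \<mu> y\<bar> \<le> C + ?D"
    by (rule le_of_nat_mult_le_linear)
  then show ?thesis
    by simp
qed

end

end

theorem proposition4p4:
  fixes G :: "('a, 'b) monoid_scheme" and N :: "'a set" and \<mu> :: "'a \<Rightarrow> real"
  assumes "group G"
    and "N \<lhd> G"
    and "homogeneous_quasimorphism G N \<mu>"
    and "G_invariant G N \<mu>"
  shows "defect G N \<mu> = (SUP p\<in>carrier G \<times> N. \<bar>\<mu> (commutator G (fst p) (snd p))\<bar>)"
proof -
  interpret invariant_quasimorphism N G \<mu>
    by (rule invariant_quasimorphism.intro[OF assms(2) invariant_quasimorphism_axioms.intro[OF assms(3,4)]])
  define C where "C = (SUP p\<in>carrier G \<times> N. \<bar>\<mu> (commutator G (fst p) (snd p))\<bar>)"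
  have nonempty: "carrier G \<times> N \<noteq> {}" "N \<times> N \<noteq> {}"
    using subgroup.one_closed[OF is_subgroup] by blast+
  have "bdd_above ((\<lambda>p. \<bar>\<mu> (commutator G (fst p) (snd p))\<bar>) ` (carrier G \<times> N))"
    using abs_commutator_le_defect by (intro bdd_aboveI) auto
  then have commutator_le_C: "\<bar>\<mu> (commutator G g z)\<bar> \<le> C" if "g \<in> carrier G" "z \<in> N" for g z
    using cSUP_upper[of "(g, z)" "carrier G \<times> N" "\<lambda>p. \<bar>\<mu> (commutator G (fst p) (snd p))\<bar>"] that
    unfolding C_def by simp
  have "(SUP p\<in>N \<times> N. \<bar>\<mu> (fst p \<otimes>\<^bsub>G\<^esub> snd p) - \<mu> (fst p) - \<mu> (snd p)\<bar>) \<le> (C + defect G N \<mu>) / 2"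
    using abs_defect_le_commutator_bound[OF commutator_le_C] by (intro cSUP_least nonempty) auto
  then have "defect G N \<mu> \<le> (C + defect G N \<mu>) / 2"
    by (simp add: defect_def)
  moreover have "C \<le> defect G N \<mu>"
    unfolding C_def using abs_commutator_le_defect by (intro cSUP_least nonempty) auto
  ultimately have "defect G N \<mu> = C"
    by simp
  then show ?thesis
    unfolding C_def .
qed

end
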